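(* Define, for $z=(p,\tilde\theta)\in\mathbb{R}^n\times\mathbb{R}^{|\mathcal E|}$ and $\sigma=(\lambda,\eta,\nu)\in\mathbb{R}\times\mathbb{R}^{2|\mathcal E|}\times\mathbb{R}^n$, \[ \hat L(z,\sigma)=\sum_{j=1}^n J_j(p_j)-\tfrac12\nu^TD\nu+\nu^T(p-d-CB\tilde\theta)-\lambda\mathbf 1^T(p-d)+\eta^T\big(H^T(p-d)-F\big), \] and the closed-loop system \[ T^z\dot z=-\nabla_z\hat L(z,\sigma),\qquad T^\sigma\dot\sigma=\big[\nabla_\sigma\hat L(z,\sigma)\big]^+_\eta, \] where $T^z,T^\sigma$ are diagonal matrices with positive diagonal entries and the projection acts only on the $\eta$-components. Let $(z^*,\sigma^* )$, with $\eta^*\ge0$, be an equilibrium of this system. If a trajectory $(z(t),\sigma(t))$ of the system with $\eta(0)\ge0$ satisfies $\hat L(z^*,\sigma(t))\equiv\hat L(z^*,\sigma^* )$ and $\hat L(z(t),\sigma^* )\equiv\hat L(z^*,\sigma^* )$ for all $t\ge0$, then $\dot z\equiv0$ and $\dot\sigma\equiv0$.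
   Context: $(\mathcal N,\mathcal E)$ is a connected directed graph with $\mathcal N=\{1,\dots,n\}$; $C$ is its incidence matrix ($C_{j,e}=1$ if $e=(j,k)$, $-1$ if $e=(k,j)$, $0$ otherwise). $B$ and $D$ are diagonal with positive diagonal entries. $L:=CBC^T$, $H\in\mathbb{R}^{n\times 2|\mathcal E|}$ with $H^T=\begin{bmatrix} BC^TL^\dagger\\ -BC^TL^\dagger\end{bmatrix}$ ($L^\dagger$ Moore–Penrose inverse), $F=\begin{bmatrix}\overline F\\-\underline F\end{bmatrix}\in\mathbb{R}^{2|\mathcal E|}$, $d\in\mathbb{R}^n$. Each $J_j:\mathbb{R}\to\mathbb{R}$ is strictly convex and twice differentiable. Projection: for vectors $y,u$ of equal length, $([y]^+_u)_j=y_j$ if $y_j>0$ or $u_j>0$, and $0$ otherwise; here $[\cdot]^+_\eta$ is applied to the $\eta$-block of the gradient with $u=\eta$, other blocks unchanged. (This system models generators' quantity-bidding gradient play, market pricing dynamics, and linearized swing dynamics with $\omega\equiv\nu$.) *)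

theory Defs
  imports "HOL-Analysis.Analysis"
begin

definition simple_digraph :: "('e \<Rightarrow> 'n) \<Rightarrow> ('e \<Rightarrow> 'n) \<Rightarrow> bool" where
  "simple_digraph src tgt \<longleftrightarrow> (\<forall>e. src e \<noteq> tgt e) \<and> inj (\<lambda>e. (src e, tgt e))"

definition connected_digraph :: "('e \<Rightarrow> 'n) \<Rightarrow> ('e \<Rightarrow> 'n) \<Rightarrow> bool" where
  "connected_digraph src tgt \<longleftrightarrow>
     (\<forall>i j. (i, j) \<in> ({(src e, tgt e) | e. True} \<union> {(tgt e, src e) | e. True})\<^sup>*)"

definition incidence :: "('e \<Rightarrow> 'n) \<Rightarrow> ('e \<Rightarrow> 'n) \<Rightarrow> real^'e^'n" where
  "incidence src tgt = (\<chi> j e. if src e = j then 1 else if tgt e = j then -1 else 0)"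

definition is_diag :: "real^'a^'a \<Rightarrow> bool" where
  "is_diag A \<longleftrightarrow> (\<forall>i j. i \<noteq> j \<longrightarrow> A $ i $ j = 0)"

definition pos_diag :: "real^'a^'a \<Rightarrow> bool" where
  "pos_diag A \<longleftrightarrow> is_diag A \<and> (\<forall>i. A $ i $ i > 0)"

definition mp_pinv :: "real^'m^'k \<Rightarrow> real^'k^'m" where
  "mp_pinv A = (THE X. A ** X ** A = A \<and> X ** A ** X = X \<and>
       transpose (A ** X) = A ** X \<and> transpose (X ** A) = X ** A)"

definition strictly_convex :: "(real \<Rightarrow> real) \<Rightarrow> bool" where
  "strictly_convex f \<longleftrightarrow> (\<forall>x y t. x \<noteq> y \<and> 0 < t \<and> t < 1 \<longrightarrow>
      f ((1 - t) * x + t * y) < (1 - t) * f x + t * f y)"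

definition twice_differentiable :: "(real \<Rightarrow> real) \<Rightarrow> bool" where
  "twice_differentiable f \<longleftrightarrow> (\<exists>f'. (\<forall>x. (f has_real_derivative f' x) (at x)) \<and>
      (\<forall>x. f' differentiable (at x)))"

text \<open>H^T = [B C^T L^+ ; - B C^T L^+], a (2|E|) x n matrix with rows indexed by 'e + 'e.\<close>
definition HT_mat :: "('e \<Rightarrow> 'n) \<Rightarrow> ('e \<Rightarrow> 'n) \<Rightarrow> real^'e^'e \<Rightarrow> real^'n^('e + 'e)" where
  "HT_mat src tgt B =
     (let C = incidence src tgt; L = C ** B ** transpose C; M = B ** transpose C ** mp_pinv L
      in (\<chi> k. case k of Inl e \<Rightarrow> M $ e | Inr e \<Rightarrow> - (M $ e)))"

definition F_vec :: "real^'e \<Rightarrow> real^'e \<Rightarrow> real^('e + 'e)" where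
  "F_vec Fup Flow = (\<chi> k. case k of Inl e \<Rightarrow> Fup $ e | Inr e \<Rightarrow> - (Flow $ e))"

definition Lhat ::
  "('e \<Rightarrow> 'n) \<Rightarrow> ('e \<Rightarrow> 'n) \<Rightarrow> real^'e^'e \<Rightarrow> real^'n^'n \<Rightarrow> real^'e \<Rightarrow> real^'e \<Rightarrow> real^'n
   \<Rightarrow> ('n \<Rightarrow> real \<Rightarrow> real) \<Rightarrow> ((real^'n) \<times> (real^'e)) \<Rightarrow> (real \<times> (real^('e + 'e)) \<times> (real^'n)) \<Rightarrow> real" where
  "Lhat src tgt B D Fup Flow d J z \<sigma> =
     (case z of (p, th) \<Rightarrow> case \<sigma> of (lam, eta, nu) \<Rightarrow>
        (\<Sum>j\<in>UNIV. J j (p $ j))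
        - (1/2) * (nu \<bullet> (D *v nu))
        + nu \<bullet> (p - d - (incidence src tgt ** B) *v th)
        - lam * ((\<chi> j. 1) \<bullet> (p - d))
        + eta \<bullet> (HT_mat src tgt B *v (p - d) - F_vec Fup Flow))"

definition proj_plus :: "real^'a \<Rightarrow> real^'a \<Rightarrow> real^'a" where
  "proj_plus y u = (\<chi> j. if y $ j > 0 \<or> u $ j > 0 then y $ j else 0)"

definition proj_sigma :: "(real \<times> (real^'b) \<times> (real^'c)) \<Rightarrow> real^'b \<Rightarrow> (real \<times> (real^'b) \<times> (real^'c))" where
  "proj_sigma g eta = (case g of (gl, ge, gn) \<Rightarrow> (gl, proj_plus ge eta, gn))"

definition nonneg_vec :: "real^'a \<Rightarrow> bool" where
  "nonneg_vec v \<longleftrightarrow> (\<forall>i. v $ i \<ge> 0)"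

end

theory Submission
  imports Defs
begin

text \<open>
  For fixed \<open>\<sigma>\<^sup>*\<close>, \<open>L(z, \<sigma>\<^sup>*)\<close> is the strictly convex separable sum \<open>\<Sum>\<^sub>j J\<^sub>j(p\<^sub>j)\<close> plus an affine
  function, and its gradient vanishes at \<open>z\<^sup>*\<close>; so \<open>L(z, \<sigma>\<^sup>*) = L(z\<^sup>*, \<sigma>\<^sup>*)\<close> forces \<open>p = p\<^sup>*\<close>.
  For fixed \<open>z\<^sup>*\<close>, \<open>L(z\<^sup>*, \<sigma>)\<close> is concave quadratic, with curvature \<open>-D\<close> in \<open>\<nu>\<close> only, and its
  gradient at \<open>\<sigma>\<^sup>*\<close> is \<open>(0, g\<^sub>\<eta>, 0)\<close> with \<open>g\<^sub>\<eta> \<le> 0\<close> complementary to \<open>\<eta>\<^sup>*\<close>; so for \<open>\<eta> \<ge> 0\<close>,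
  \<open>L(z\<^sup>*, \<sigma>) = L(z\<^sup>*, \<sigma>\<^sup>*)\<close> forces \<open>\<nu> = \<nu>\<^sup>*\<close> and \<open>g\<^sub>\<eta>\<close> complementary to \<open>\<eta>\<close>. The projection keeps
  \<open>\<eta>(t) \<ge> 0\<close>, so along the trajectory \<open>p\<close> and \<open>\<nu>\<close> are constant. The \<open>\<theta>\<close>-gradient
  \<open>-(CB)\<^sup>T\<nu>\<close> then keeps its equilibrium value \<open>0\<close>, and the \<open>\<lambda>\<close>- and \<open>\<eta>\<close>-gradients, which depend on
  \<open>p\<close> only, keep their equilibrium values, which the projection annihilates by complementarity.
\<close>

lemma strictly_convex_imp_convex_on:
  assumes "strictly_convex f"
  shows "convex_on UNIV f"
proof (rule convex_onI)
  fix t x y :: real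
  assume t: "0 < t" "t < 1"
  show "f ((1 - t) *\<^sub>R x + t *\<^sub>R y) \<le> (1 - t) * f x + t * f y"
  proof (cases "x = y")
    case False
    with assms t have "f ((1 - t) * x + t * y) < (1 - t) * f x + t * f y"
      unfolding strictly_convex_def by blast
    then show ?thesis by simp
  qed (simp add: algebra_simps)
qed simp

lemma strictly_convex_above_tangent:
  assumes "strictly_convex f" and "(f has_real_derivative f') (at x)" and "y \<noteq> x"
  shows "f x + f' * (y - x) < f y"
proof -
  \<comment> \<open>the midpoint, written in the shape of \<open>strictly_convex_def\<close>\<close>
  define m where "m = (1 - 1/2) * x + 1/2 * y"
  have "f' * (m - x) \<le> f m - f x"
    using convex_on_imp_above_tangent[OF strictly_convex_imp_convex_on[OF assms(1)], of x m f']
      assms(2)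
    by simp
  moreover have "f m < (1 - 1/2) * f x + 1/2 * f y"
    using assms(1) \<open>y \<noteq> x\<close> unfolding strictly_convex_def m_def
    by (elim allE[of _ x] allE[of _ y] allE[of _ "1/2"]) simp
  moreover have "f' * (m - x) = f' * (y - x) / 2"
    unfolding m_def by (simp add: algebra_simps)
  ultimately show ?thesis
    by (simp add: field_simps)
qed

lemma has_gradient_imp_line_derivative:
  assumes "GDERIV f x :> g"
  shows "((\<lambda>r. f (x + r *\<^sub>R u)) has_real_derivative g \<bullet> u) (at 0)"
proof -
  have "((\<lambda>r. x + r *\<^sub>R u) has_derivative (\<lambda>r. r *\<^sub>R u)) (at 0)"
    by (auto intro!: derivative_eq_intros)
  moreover have "(f has_derivative (\<lambda>h. h \<bullet> g)) (at (x + 0 *\<^sub>R u))"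
    using assms by (simp add: gderiv_def)
  ultimately have "((\<lambda>r. f (x + r *\<^sub>R u)) has_derivative (\<lambda>r. r *\<^sub>R u \<bullet> g)) (at 0)"
    by (rule has_derivative_compose[unfolded o_def])
  then show ?thesis
    unfolding has_field_derivative_def by (simp add: inner_commute mult_commute_abs)
qed

lemma gradient_inner_eqI:
  assumes "GDERIV f x :> g" and "((\<lambda>r. f (x + r *\<^sub>R u)) has_real_derivative c) (at 0)"
  shows "g \<bullet> u = c"
  using has_gradient_imp_line_derivative[OF assms(1), of u] assms(2) by (rule DERIV_unique)

lemma is_diag_mult_nth:
  assumes "is_diag A"
  shows "(A *v x) $ i = A $ i $ i * x $ i"
proof -
  have "(A *v x) $ i = (\<Sum>k\<in>UNIV. A $ i $ k * x $ k)"
    by (simp add: matrix_vector_mult_def)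
  also have "\<dots> = (\<Sum>k\<in>UNIV. if k = i then A $ i $ i * x $ i else 0)"
    using assms unfolding is_diag_def by (intro sum.cong) auto
  finally show ?thesis by simp
qed

lemma is_diag_quadratic_form:
  assumes "is_diag A"
  shows "x \<bullet> (A *v x) = (\<Sum>i\<in>UNIV. A $ i $ i * (x $ i)\<^sup>2)"
  using assms unfolding inner_vec_def
  by (simp add: is_diag_mult_nth power2_eq_square mult_ac)

lemma pos_diag_quadratic_form_nonneg:
  assumes "pos_diag A"
  shows "0 \<le> x \<bullet> (A *v x)"
  using assms unfolding pos_diag_def
  by (simp add: is_diag_quadratic_form sum_nonneg less_imp_le)

lemma pos_diag_quadratic_form_eq_0_iff:
  assumes "pos_diag A"
  shows "x \<bullet> (A *v x) = 0 \<longleftrightarrow> x = 0"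
proof
  assume "x \<bullet> (A *v x) = 0"
  moreover have "\<forall>i\<in>UNIV. 0 \<le> A $ i $ i * (x $ i)\<^sup>2"
    using assms by (simp add: pos_diag_def less_imp_le)
  ultimately have "\<forall>i\<in>UNIV. A $ i $ i * (x $ i)\<^sup>2 = 0"
    using assms unfolding pos_diag_def by (simp add: is_diag_quadratic_form sum_nonneg_eq_0_iff)
  then show "x = 0"
    using assms unfolding pos_diag_def by (simp add: vec_eq_iff less_imp_neq[symmetric])
qed simp

lemma pos_diag_mult_eq_0_iff:
  assumes "pos_diag A"
  shows "A *v x = 0 \<longleftrightarrow> x = 0"
proof -
  have "A $ i $ i * x $ i = 0 \<longleftrightarrow> x $ i = 0" for i
    using assms unfolding pos_diag_def by (simp add: less_imp_neq[symmetric])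
  then show ?thesis
    using assms unfolding pos_diag_def by (simp add: vec_eq_iff is_diag_mult_nth)
qed

lemma proj_plus_eq_0_iff:
  assumes "nonneg_vec u"
  shows "proj_plus y u = 0 \<longleftrightarrow> (\<forall>i. y $ i \<le> 0 \<and> y $ i * u $ i = 0)"
proof -
  have "(if 0 < y $ i \<or> 0 < u $ i then y $ i else 0) = 0 \<longleftrightarrow> y $ i \<le> 0 \<and> y $ i * u $ i = 0"
    for i
    using assms[unfolded nonneg_vec_def, rule_format, of i]
    by (cases "0 < y $ i"; cases "0 < u $ i") auto
  then show ?thesis
    unfolding proj_plus_def vec_eq_iff by simp
qed

lemma proj_plus_nth_nonneg:
  assumes "u $ i \<le> 0"
  shows "0 \<le> proj_plus y u $ i"
  using assms unfolding proj_plus_def by auto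

lemma nonneg_forward_invariant:
  fixes f f' :: "real \<Rightarrow> real"
  assumes deriv: "\<And>t. 0 \<le> t \<Longrightarrow> (f has_real_derivative f' t) (at t within {0..})"
    and inward: "\<And>t. 0 \<le> t \<Longrightarrow> f t < 0 \<Longrightarrow> 0 \<le> f' t"
    and "0 \<le> f 0" and "0 \<le> t"
  shows "0 \<le> f t"
proof (rule ccontr)
  assume "\<not> 0 \<le> f t"
  have cont: "continuous_on {0..} f"
    using deriv by (metis atLeast_iff continuous_on_eq_continuous_within DERIV_continuous)
  \<comment> \<open>\<open>f\<close> is nondecreasing after the last time \<open>t0 \<le> t\<close> at which it is nonnegative\<close>
  let ?S = "{0..t} \<inter> f -` {0..}"
  have "closed ?S"
    using continuous_on_subset[OF cont, of "{0..t}"] by (intro continuous_closed_preimage) auto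
  then have "compact ?S"
    by (simp add: compact_eq_bounded_closed bounded_Int)
  moreover have "0 \<in> ?S"
    using assms by auto
  ultimately obtain t0 where "t0 \<in> ?S" and last: "\<forall>u\<in>?S. u \<le> t0"
    using compact_attains_sup by blast
  then have t0: "0 \<le> t0" "t0 \<le> t" "0 \<le> f t0"
    by auto
  have "f t0 \<le> f t"
  proof (rule DERIV_nonneg_imp_increasing_open[OF \<open>t0 \<le> t\<close>])
    fix u assume u: "t0 < u" "u < t"
    then have "u \<notin> ?S"
      using last by force
    then have "f u < 0"
      using u t0 by auto
    have "at u within {0..} = at u"
      by (rule at_within_open_subset[of u "{0<..}"]) (use u t0 in auto)
    then show "\<exists>y. (f has_real_derivative y) (at u) \<and> 0 \<le> y"
      using deriv[of u] inward[of u] \<open>f u < 0\<close> u t0 by auto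
  qed (use continuous_on_subset[OF cont] t0 in auto)
  with t0 \<open>\<not> 0 \<le> f t\<close> show False
    by simp
qed

lemma linear_image_constant_imp_derivative_zero:
  assumes "bounded_linear h" and "(f has_vector_derivative f') (at t within {0..})" and "0 \<le> t"
    and const: "\<And>u. 0 \<le> u \<Longrightarrow> h (f u) = k"
  shows "h f' = 0"
proof -
  have "at t within {t..} \<le> at t within {0..}"
    using \<open>0 \<le> t\<close> by (intro at_le) auto
  then have "at t within {0..} \<noteq> bot"
    by (auto simp: at_within_Ici_at_right bot_unique)
  moreover have "((\<lambda>u. h (f u)) has_vector_derivative h f') (at t within {0..})"
    using bounded_linear.has_vector_derivative[OF assms(1,2)] .
  moreover have "((\<lambda>u. h (f u)) has_vector_derivative 0) (at t within {0..})"
    using const \<open>0 \<le> t\<close>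
    by (intro has_vector_derivative_transform[OF _ _ has_vector_derivative_const[of k]]) auto
  ultimately show ?thesis
    by (rule vector_derivative_unique_within)
qed

lemma projected_dynamics_nonneg:
  fixes x x' :: "real \<Rightarrow> real^'k"
  assumes T: "pos_diag T"
    and deriv: "\<And>t. 0 \<le> t \<Longrightarrow> (x has_vector_derivative x' t) (at t within {0..})"
    and ode: "\<And>t. 0 \<le> t \<Longrightarrow> \<exists>y. T *v x' t = proj_plus y (x t)"
    and "nonneg_vec (x 0)" and "0 \<le> t"
  shows "nonneg_vec (x t)"
  unfolding nonneg_vec_def
proof
  fix i
  show "0 \<le> x t $ i"
  proof (rule nonneg_forward_invariant[where f = "\<lambda>t. x t $ i" and f' = "\<lambda>t. x' t $ i"])
    fix u :: real assume "0 \<le> u"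
    show "((\<lambda>t. x t $ i) has_real_derivative x' u $ i) (at u within {0..})"
      using bounded_linear.has_vector_derivative[OF bounded_linear_vec_nth deriv[OF \<open>0 \<le> u\<close>]]
      by (simp add: has_real_derivative_iff_has_vector_derivative)
  next
    fix u :: real assume "0 \<le> u" and "x u $ i < 0"
    obtain y where "T *v x' u = proj_plus y (x u)"
      using ode[OF \<open>0 \<le> u\<close>] by blast
    then have "0 \<le> T $ i $ i * x' u $ i"
      using T \<open>x u $ i < 0\<close> proj_plus_nth_nonneg[of "x u" i y] unfolding pos_diag_def
      by (metis is_diag_mult_nth less_imp_le)
    moreover have "0 < T $ i $ i"
      using T unfolding pos_diag_def by blast
    ultimately show "0 \<le> x' u $ i"
      by (simp add: zero_le_mult_iff)
  qed (use assms(4,5) in \<open>auto simp: nonneg_vec_def\<close>)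
qed

lemma projected_sigma_dynamics_eta_nonneg:
  fixes s s' :: "real \<Rightarrow> real \<times> (real^'k) \<times> (real^'m)"
  assumes "pos_diag Te"
    and deriv: "\<And>t. 0 \<le> t \<Longrightarrow> (s has_vector_derivative s' t) (at t within {0..})"
    and ode: "\<And>t. 0 \<le> t \<Longrightarrow>
      \<exists>g. (\<lambda>(l, e, v). (Tl * l, Te *v e, Tn *v v)) (s' t) = proj_sigma g (fst (snd (s t)))"
    and "nonneg_vec (fst (snd (s 0)))" and "0 \<le> t"
  shows "nonneg_vec (fst (snd (s t)))"
proof (rule projected_dynamics_nonneg[where x = "\<lambda>t. fst (snd (s t))", OF assms(1)])
  fix u :: real
  assume "0 \<le> u"
  show "((\<lambda>t. fst (snd (s t))) has_vector_derivative fst (snd (s' u))) (at u within {0..})"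
    using bounded_linear.has_vector_derivative[OF _ deriv[OF \<open>0 \<le> u\<close>]]
      bounded_linear_compose[OF bounded_linear_fst bounded_linear_snd] .
  show "\<exists>y. Te *v fst (snd (s' u)) = proj_plus y (fst (snd (s u)))"
    using ode[OF \<open>0 \<le> u\<close>] unfolding proj_sigma_def by (auto split: prod.splits)
qed (use assms(4,5) in auto)

context
  fixes src tgt :: "'e::finite \<Rightarrow> 'n::finite"
    and B :: "real^'e^'e" and D :: "real^'n^'n"
    and Fup Flow :: "real^'e" and d :: "real^'n"
    and J :: "'n \<Rightarrow> real \<Rightarrow> real"
begin

lemma Lhat_z_shift:
  "Lhat src tgt B D Fup Flow d J ((p, th) + r *\<^sub>R (a, b)) (lam, eta, nu) =
   Lhat src tgt B D Fup Flow d J (p, th) (lam, eta, nu)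
   + (\<Sum>j\<in>UNIV. J j (p $ j + r * a $ j) - J j (p $ j))
   + r * (nu \<bullet> a - nu \<bullet> ((incidence src tgt ** B) *v b) - lam * ((\<chi> j. 1) \<bullet> a)
          + eta \<bullet> (HT_mat src tgt B *v a))"
  unfolding Lhat_def
  by (simp add: algebra_simps inner_add_right inner_diff_right sum_subtractf)

lemma Lhat_sigma_shift:
  "Lhat src tgt B D Fup Flow d J (p, th) ((lam, eta, nu) + r *\<^sub>R (a, e, c)) =
   Lhat src tgt B D Fup Flow d J (p, th) (lam, eta, nu)
   + r * (- (1/2) * (nu \<bullet> (D *v c) + c \<bullet> (D *v nu))
          + c \<bullet> (p - d - (incidence src tgt ** B) *v th)
          - a * ((\<chi> j. 1) \<bullet> (p - d)) + e \<bullet> (HT_mat src tgt B *v (p - d) - F_vec Fup Flow))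
   - r\<^sup>2 / 2 * (c \<bullet> (D *v c))"
  unfolding Lhat_def
  by (simp add: algebra_simps inner_add_right inner_add_left inner_diff_right power2_eq_square)

lemma Lhat_z_gradient_inner:
  assumes "GDERIV (\<lambda>w. Lhat src tgt B D Fup Flow d J w (lam, eta, nu)) (p, th) :> g"
    and J': "\<And>j x. (J j has_real_derivative J' j x) (at x)"
  shows "g \<bullet> (a, b) = (\<Sum>j\<in>UNIV. J' j (p $ j) * a $ j)
    + nu \<bullet> a - nu \<bullet> ((incidence src tgt ** B) *v b) - lam * ((\<chi> j. 1) \<bullet> a)
    + eta \<bullet> (HT_mat src tgt B *v a)"
  using assms(1)
proof (rule gradient_inner_eqI)
  show "((\<lambda>r. Lhat src tgt B D Fup Flow d J ((p, th) + r *\<^sub>R (a, b)) (lam, eta, nu))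
      has_real_derivative (\<Sum>j\<in>UNIV. J' j (p $ j) * a $ j)
    + nu \<bullet> a - nu \<bullet> ((incidence src tgt ** B) *v b) - lam * ((\<chi> j. 1) \<bullet> a)
    + eta \<bullet> (HT_mat src tgt B *v a)) (at 0)"
    unfolding Lhat_z_shift
    by (auto intro!: derivative_eq_intros DERIV_chain2[OF J'])
qed

lemma Lhat_z_gradient_theta:
  assumes "GDERIV (\<lambda>w. Lhat src tgt B D Fup Flow d J w \<sigma>) z :> g"
  shows "snd g \<bullet> b = - (snd (snd \<sigma>) \<bullet> ((incidence src tgt ** B) *v b))"
proof -
  obtain p th where z: "z = (p, th)"
    by (cases z)
  obtain lam eta nu where \<sigma>: "\<sigma> = (lam, eta, nu)"
    by (cases \<sigma> rule: prod_cases3)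
  have "g \<bullet> (0, b) = - (nu \<bullet> ((incidence src tgt ** B) *v b))"
    using assms unfolding z \<sigma>
  proof (rule gradient_inner_eqI)
    show "((\<lambda>r. Lhat src tgt B D Fup Flow d J ((p, th) + r *\<^sub>R (0, b)) (lam, eta, nu))
        has_real_derivative - (nu \<bullet> ((incidence src tgt ** B) *v b))) (at 0)"
      unfolding Lhat_z_shift by (auto intro!: derivative_eq_intros)
  qed
  then show ?thesis
    by (simp add: inner_Pair_0 \<sigma>)
qed

lemma Lhat_z_gradient_theta_eq:
  assumes "GDERIV (\<lambda>w. Lhat src tgt B D Fup Flow d J w \<sigma>) z :> g"
    and "GDERIV (\<lambda>w. Lhat src tgt B D Fup Flow d J w \<sigma>') z' :> g'"
    and "snd (snd \<sigma>) = snd (snd \<sigma>')"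
  shows "snd g = snd g'"
proof -
  have "snd g \<bullet> b = snd g' \<bullet> b" for b
    using Lhat_z_gradient_theta[OF assms(1)] Lhat_z_gradient_theta[OF assms(2)] assms(3) by simp
  then show ?thesis
    using vector_eq_rdot by blast
qed

lemma Lhat_sigma_gradient_inner:
  assumes "GDERIV (\<lambda>w. Lhat src tgt B D Fup Flow d J (p, th) w) (lam, eta, nu) :> g"
  shows "g \<bullet> (a, e, c) = - (1/2) * (nu \<bullet> (D *v c) + c \<bullet> (D *v nu))
    + c \<bullet> (p - d - (incidence src tgt ** B) *v th)
    - a * ((\<chi> j. 1) \<bullet> (p - d)) + e \<bullet> (HT_mat src tgt B *v (p - d) - F_vec Fup Flow)"
  using assms
proof (rule gradient_inner_eqI)
  show "((\<lambda>r. Lhat src tgt B D Fup Flow d J (p, th) ((lam, eta, nu) + r *\<^sub>R (a, e, c)))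
      has_real_derivative - (1/2) * (nu \<bullet> (D *v c) + c \<bullet> (D *v nu))
    + c \<bullet> (p - d - (incidence src tgt ** B) *v th)
    - a * ((\<chi> j. 1) \<bullet> (p - d)) + e \<bullet> (HT_mat src tgt B *v (p - d) - F_vec Fup Flow)) (at 0)"
    unfolding Lhat_sigma_shift by (auto intro!: derivative_eq_intros)
qed

lemma Lhat_sigma_gradient_lambda_eta:
  assumes "GDERIV (\<lambda>w. Lhat src tgt B D Fup Flow d J z w) \<sigma> :> g"
  shows "fst g = - ((\<chi> j. 1) \<bullet> (fst z - d))"
    and "fst (snd g) = HT_mat src tgt B *v (fst z - d) - F_vec Fup Flow"
proof -
  obtain p th where z: "z = (p, th)"
    by (cases z)
  obtain lam eta nu where \<sigma>: "\<sigma> = (lam, eta, nu)"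
    by (cases \<sigma> rule: prod_cases3)
  note inner = Lhat_sigma_gradient_inner[OF assms[unfolded z \<sigma>]]
  show "fst g = - ((\<chi> j. 1) \<bullet> (fst z - d))"
    using inner[of 1 0 0] by (simp add: z inner_prod_def)
  have "fst (snd g) \<bullet> e = (HT_mat src tgt B *v (p - d) - F_vec Fup Flow) \<bullet> e" for e
    using inner[of 0 e 0] by (simp add: inner_prod_def inner_commute)
  then show "fst (snd g) = HT_mat src tgt B *v (fst z - d) - F_vec Fup Flow"
    using vector_eq_rdot z by auto
qed

lemma Lhat_z_expansion:
  assumes "GDERIV (\<lambda>w. Lhat src tgt B D Fup Flow d J w \<sigma>) z\<^sub>0 :> g"
    and J': "\<And>j x. (J j has_real_derivative J' j x) (at x)"
  shows "Lhat src tgt B D Fup Flow d J z \<sigma> = Lhat src tgt B D Fup Flow d J z\<^sub>0 \<sigma> + g \<bullet> (z - z\<^sub>0)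
    + (\<Sum>j\<in>UNIV. J j (fst z $ j) - J j (fst z\<^sub>0 $ j) - J' j (fst z\<^sub>0 $ j) * (fst z $ j - fst z\<^sub>0 $ j))"
proof -
  obtain p th p\<^sub>0 th\<^sub>0 where z: "z = (p, th)" and z\<^sub>0: "z\<^sub>0 = (p\<^sub>0, th\<^sub>0)"
    by (cases z, cases z\<^sub>0)
  obtain lam eta nu where \<sigma>: "\<sigma> = (lam, eta, nu)"
    by (cases \<sigma> rule: prod_cases3)
  have "z = z\<^sub>0 + 1 *\<^sub>R (p - p\<^sub>0, th - th\<^sub>0)"
    by (simp add: z z\<^sub>0)
  then show ?thesis
    using Lhat_z_shift[of p\<^sub>0 th\<^sub>0 1 "p - p\<^sub>0" "th - th\<^sub>0" lam eta nu]
      Lhat_z_gradient_inner[OF assms[unfolded z\<^sub>0 \<sigma>], of "p - p\<^sub>0" "th - th\<^sub>0"]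
    by (simp add: z z\<^sub>0 \<sigma> sum_subtractf)
qed

lemma Lhat_sigma_expansion:
  assumes "GDERIV (\<lambda>w. Lhat src tgt B D Fup Flow d J z w) \<sigma>\<^sub>0 :> g"
  shows "Lhat src tgt B D Fup Flow d J z \<sigma> = Lhat src tgt B D Fup Flow d J z \<sigma>\<^sub>0 + g \<bullet> (\<sigma> - \<sigma>\<^sub>0)
    - (1/2) * ((snd (snd \<sigma>) - snd (snd \<sigma>\<^sub>0)) \<bullet> (D *v (snd (snd \<sigma>) - snd (snd \<sigma>\<^sub>0))))"
proof -
  obtain p th where z: "z = (p, th)"
    by (cases z)
  obtain lam eta nu lam\<^sub>0 eta\<^sub>0 nu\<^sub>0 where \<sigma>: "\<sigma> = (lam, eta, nu)"
    and \<sigma>\<^sub>0: "\<sigma>\<^sub>0 = (lam\<^sub>0, eta\<^sub>0, nu\<^sub>0)"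
    by (cases \<sigma> rule: prod_cases3, cases \<sigma>\<^sub>0 rule: prod_cases3)
  have "\<sigma> = \<sigma>\<^sub>0 + 1 *\<^sub>R (lam - lam\<^sub>0, eta - eta\<^sub>0, nu - nu\<^sub>0)"
    by (simp add: \<sigma> \<sigma>\<^sub>0)
  then show ?thesis
    using Lhat_sigma_shift[of p th lam\<^sub>0 eta\<^sub>0 nu\<^sub>0 1 "lam - lam\<^sub>0" "eta - eta\<^sub>0" "nu - nu\<^sub>0"]
      Lhat_sigma_gradient_inner[OF assms[unfolded z \<sigma>\<^sub>0], of "lam - lam\<^sub>0" "eta - eta\<^sub>0" "nu - nu\<^sub>0"]
    by (simp add: z \<sigma> \<sigma>\<^sub>0)
qed

lemma Lhat_eq_at_z_stationary_imp_fst_eq: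
  assumes J_conv: "\<And>j. strictly_convex (J j)"
    and J': "\<And>j x. (J j has_real_derivative J' j x) (at x)"
    and stationary: "GDERIV (\<lambda>w. Lhat src tgt B D Fup Flow d J w \<sigma>) z\<^sub>0 :> 0"
    and eq: "Lhat src tgt B D Fup Flow d J z \<sigma> = Lhat src tgt B D Fup Flow d J z\<^sub>0 \<sigma>"
  shows "fst z = fst z\<^sub>0"
proof -
  define R where "R j = J j (fst z $ j) - J j (fst z\<^sub>0 $ j) - J' j (fst z\<^sub>0 $ j) * (fst z $ j - fst z\<^sub>0 $ j)"
    for j
  have R_pos: "0 < R j" if "fst z $ j \<noteq> fst z\<^sub>0 $ j" for j
    using strictly_convex_above_tangent[OF J_conv J'[of j "fst z\<^sub>0 $ j"] that] unfolding R_def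
    by simp
  then have "0 \<le> R j" for j
    by (cases "fst z $ j = fst z\<^sub>0 $ j") (auto simp: R_def less_imp_le)
  moreover have "sum R UNIV = 0"
    using Lhat_z_expansion[OF stationary J', of z] eq unfolding R_def by simp
  ultimately have "R j = 0" for j
    by (simp add: sum_nonneg_eq_0_iff)
  then show ?thesis
    using R_pos by (auto simp: vec_eq_iff)
qed

lemma Lhat_eq_at_sigma_stationary:
  assumes D: "pos_diag D"
    and grad: "GDERIV (\<lambda>w. Lhat src tgt B D Fup Flow d J z w) \<sigma>\<^sub>0 :> g"
    and stationary: "proj_sigma g (fst (snd \<sigma>\<^sub>0)) = 0"
    and "nonneg_vec (fst (snd \<sigma>\<^sub>0))" and "nonneg_vec (fst (snd \<sigma>))"
    and eq: "Lhat src tgt B D Fup Flow d J z \<sigma> = Lhat src tgt B D Fup Flow d J z \<sigma>\<^sub>0"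
  shows "snd (snd \<sigma>) = snd (snd \<sigma>\<^sub>0)" and "proj_plus (fst (snd g)) (fst (snd \<sigma>)) = 0"
proof -
  obtain ge where g: "g = (0, ge, 0)" and "proj_plus ge (fst (snd \<sigma>\<^sub>0)) = 0"
    using stationary unfolding proj_sigma_def by (auto simp: zero_prod_def split: prod.splits)
  then have ge: "ge $ i \<le> 0" "ge $ i * fst (snd \<sigma>\<^sub>0) $ i = 0" for i
    using proj_plus_eq_0_iff[OF assms(4)] by auto
  \<comment> \<open>both the linear and the quadratic term of the expansion are nonpositive, so both vanish\<close>
  define \<Delta> where "\<Delta> = snd (snd \<sigma>) - snd (snd \<sigma>\<^sub>0)"
  have "g \<bullet> (\<sigma> - \<sigma>\<^sub>0) = ge \<bullet> fst (snd \<sigma>) - ge \<bullet> fst (snd \<sigma>\<^sub>0)"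
    by (simp add: g inner_prod_def inner_diff_right)
  also have "\<dots> = (\<Sum>i\<in>UNIV. ge $ i * fst (snd \<sigma>) $ i)"
    by (simp add: inner_vec_def ge(2))
  finally have "g \<bullet> (\<sigma> - \<sigma>\<^sub>0) = (\<Sum>i\<in>UNIV. ge $ i * fst (snd \<sigma>) $ i)" .
  moreover have "ge $ i * fst (snd \<sigma>) $ i \<le> 0" for i
    using ge(1) assms(5) unfolding nonneg_vec_def by (simp add: mult_nonpos_nonneg)
  moreover have "0 \<le> \<Delta> \<bullet> (D *v \<Delta>)"
    by (rule pos_diag_quadratic_form_nonneg[OF D])
  ultimately have "\<Delta> \<bullet> (D *v \<Delta>) = 0" and "(\<Sum>i\<in>UNIV. - (ge $ i * fst (snd \<sigma>) $ i)) = 0"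
    using Lhat_sigma_expansion[OF grad, of \<sigma>] eq sum_nonpos[of UNIV "\<lambda>i. ge $ i * fst (snd \<sigma>) $ i"]
    unfolding \<Delta>_def by (auto simp: sum_negf)
  then show "snd (snd \<sigma>) = snd (snd \<sigma>\<^sub>0)"
    using pos_diag_quadratic_form_eq_0_iff[OF D] unfolding \<Delta>_def by simp
  have "ge $ i * fst (snd \<sigma>) $ i = 0" for i
    using \<open>(\<Sum>i\<in>UNIV. - (ge $ i * fst (snd \<sigma>) $ i)) = 0\<close> \<open>\<And>i. ge $ i * fst (snd \<sigma>) $ i \<le> 0\<close>
    by (simp add: sum_nonneg_eq_0_iff)
  then show "proj_plus (fst (snd g)) (fst (snd \<sigma>)) = 0"
    using proj_plus_eq_0_iff[OF assms(5)] ge(1) g by simp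
qed

lemma Lhat_projected_sigma_gradient_at_complementary:
  assumes "GDERIV (\<lambda>w. Lhat src tgt B D Fup Flow d J z\<^sub>0 w) \<sigma>\<^sub>0 :> g\<^sub>0"
    and "proj_sigma g\<^sub>0 (fst (snd \<sigma>\<^sub>0)) = 0"
    and "GDERIV (\<lambda>w. Lhat src tgt B D Fup Flow d J z w) \<sigma> :> g"
    and "fst z = fst z\<^sub>0" and "proj_plus (fst (snd g\<^sub>0)) (fst (snd \<sigma>)) = 0"
  shows "proj_sigma g (fst (snd \<sigma>)) = (0, 0, snd (snd g))"
  using Lhat_sigma_gradient_lambda_eta[OF assms(1)] Lhat_sigma_gradient_lambda_eta[OF assms(3)] assms(2,4,5)
  unfolding proj_sigma_def by (auto simp: zero_prod_def split: prod.splits)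

end

theorem proposition1:
  fixes src tgt :: "'e::finite \<Rightarrow> 'n::finite"
    and B :: "real^'e^'e" and D :: "real^'n^'n"
    and Fup Flow :: "real^'e" and d :: "real^'n"
    and J :: "'n \<Rightarrow> real \<Rightarrow> real"
    and Tp :: "real^'n^'n" and Tth :: "real^'e^'e"
    and Tl :: real and Te :: "real^('e + 'e)^('e + 'e)" and Tn :: "real^'n^'n"
    and zs :: "(real^'n) \<times> (real^'e)" and ss :: "real \<times> (real^('e + 'e)) \<times> (real^'n)"
    and z z' :: "real \<Rightarrow> (real^'n) \<times> (real^'e)"
    and s s' :: "real \<Rightarrow> real \<times> (real^('e + 'e)) \<times> (real^'n)"
  defines "LL \<equiv> Lhat src tgt B D Fup Flow d J"
    and "TZ \<equiv> (\<lambda>(a, b). (Tp *v a, Tth *v b))"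
    and "TS \<equiv> (\<lambda>(l, e, v). (Tl * l, Te *v e, Tn *v v))"
  assumes graph: "simple_digraph src tgt" "connected_digraph src tgt"
    and B_pos: "pos_diag B" and D_pos: "pos_diag D"
    and J_conv: "\<And>j. strictly_convex (J j)" and J_diff: "\<And>j. twice_differentiable (J j)"
    and T_pos: "pos_diag Tp" "pos_diag Tth" "Tl > 0" "pos_diag Te" "pos_diag Tn"
    and eq_z: "GDERIV (\<lambda>w. LL w ss) zs :> 0"
    and eq_s: "\<exists>g. GDERIV (\<lambda>w. LL zs w) ss :> g \<and> proj_sigma g (fst (snd ss)) = 0"
    and eq_eta: "nonneg_vec (fst (snd ss))"
    and z_deriv: "\<And>t. t \<ge> 0 \<Longrightarrow> (z has_vector_derivative z' t) (at t within {0..})"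
    and s_deriv: "\<And>t. t \<ge> 0 \<Longrightarrow> (s has_vector_derivative s' t) (at t within {0..})"
    and z_ode: "\<And>t. t \<ge> 0 \<Longrightarrow> GDERIV (\<lambda>w. LL w (s t)) (z t) :> - TZ (z' t)"
    and s_ode: "\<And>t. t \<ge> 0 \<Longrightarrow>
        \<exists>g. GDERIV (\<lambda>w. LL (z t) w) (s t) :> g \<and> TS (s' t) = proj_sigma g (fst (snd (s t)))"
    and eta0: "nonneg_vec (fst (snd (s 0)))"
    and const1: "\<And>t. t \<ge> 0 \<Longrightarrow> LL zs (s t) = LL zs ss"
    and const2: "\<And>t. t \<ge> 0 \<Longrightarrow> LL (z t) ss = LL zs ss"
  shows "\<forall>t \<ge> 0. z' t = 0 \<and> s' t = 0"
proof (intro allI impI)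
  fix t :: real
  assume "0 \<le> t"
  obtain J' where J': "\<And>j x. (J j has_real_derivative J' j x) (at x)"
    using J_diff unfolding twice_differentiable_def by metis
  obtain g where g: "GDERIV (\<lambda>w. LL zs w) ss :> g" and g_stationary: "proj_sigma g (fst (snd ss)) = 0"
    using eq_s by blast
  have eta_nonneg: "nonneg_vec (fst (snd (s u)))" if "0 \<le> u" for u
    using projected_sigma_dynamics_eta_nonneg[OF T_pos(4) s_deriv _ eta0 that] s_ode
    unfolding TS_def by blast
  have p_const: "fst (z u) = fst zs" if "0 \<le> u" for u
    using Lhat_eq_at_z_stationary_imp_fst_eq[OF J_conv J' eq_z[unfolded LL_def]] const2[OF that]
    unfolding LL_def by blast
  have nu_const: "snd (snd (s u)) = snd (snd ss)"
    and eta_complementary: "proj_plus (fst (snd g)) (fst (snd (s u))) = 0" if "0 \<le> u" for u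
    using Lhat_eq_at_sigma_stationary[OF D_pos g[unfolded LL_def] g_stationary eq_eta eta_nonneg[OF that]]
      const1[OF that] unfolding LL_def by auto
  have "fst (z' t) = 0"
    using linear_image_constant_imp_derivative_zero[OF bounded_linear_fst z_deriv[OF \<open>0 \<le> t\<close>]
        \<open>0 \<le> t\<close> p_const] .
  moreover have "snd (snd (s' t)) = 0"
    using linear_image_constant_imp_derivative_zero[
        OF bounded_linear_compose[OF bounded_linear_snd bounded_linear_snd] s_deriv[OF \<open>0 \<le> t\<close>]
        \<open>0 \<le> t\<close> nu_const] .
  moreover have "snd (z' t) = 0"
    using Lhat_z_gradient_theta_eq[OF z_ode[OF \<open>0 \<le> t\<close>, unfolded LL_def] eq_z[unfolded LL_def]]
      nu_const[OF \<open>0 \<le> t\<close>] pos_diag_mult_eq_0_iff[OF T_pos(2)]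
    by (simp add: TZ_def split_beta)
  moreover obtain g' where "GDERIV (\<lambda>w. LL (z t) w) (s t) :> g'"
    and "TS (s' t) = proj_sigma g' (fst (snd (s t)))"
    using s_ode[OF \<open>0 \<le> t\<close>] by blast
  then have "TS (s' t) = (0, 0, snd (snd g'))"
    using Lhat_projected_sigma_gradient_at_complementary[OF g[unfolded LL_def] g_stationary]
      p_const eta_complementary \<open>0 \<le> t\<close> unfolding LL_def by simp
  ultimately show "z' t = 0 \<and> s' t = 0"
    using T_pos(3) pos_diag_mult_eq_0_iff[OF T_pos(4)] by (simp add: TS_def split_beta prod_eq_iff)
qed

end
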